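(* Let a $d$-dimensional Hegselmann–Krause system with $n$ agents, confidence bound $\varepsilon>0$, arbitrary initial positions, and social network the complete graph $K_n$ evolve under uniform random asynchronous updates, and let $\delta>0$. Then the expected convergence time to a $\delta$-stable state is at most $\operatorname{O}\big(n^3(n^2+(\varepsilon/\delta)^2)\big)$.
   Context: A $d$-dimensional Hegselmann–Krause system (HKS) consists of a finite undirected graph $G=(V,E)$ (the social network) whose $n=|V|$ nodes are agents, a confidence bound $\varepsilon>0$, and initial positions $x_v(0)\in\mathbb{R}^d$. In a state (positions $x_v$), the influencing neighborhood of $v$ is $N_v=\{u:\{u,v\}\in E,\ \|x_u-x_v\|_2\le\varepsilon\}\cup\{v\}$; the influence network is $(V,E_I)$ with $E_I=\{\{u,v\}\in E:\|x_u-x_v\|_2\le\varepsilon\}$; the length of an edge $\{u,v\}$ is $\|x_u-x_v\|_2$. Uniform random asynchronous updates: at each step $t$ one agent $v$ is chosen uniformly at random (independently) and set to $x_v(t+1)=\frac{1}{|N_v(t)|}\sum_{u\in N_v(t)}x_u(t)$, all others unchanged. A state is $\delta$-stable if every edge of the influence network has length at most $\delta$; the convergence time is the number of steps until a $\delta$-stable state is first reached. Constants in the $\operatorname{O}$-notation are absolute. *)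

theory Defs
  imports "HOL-Probability.Probability"
begin

text \<open>Agents are 0..n-1; a state is a map from agents to points of R^d, where a point
  is a function nat => real of which only the coordinates 0..d-1 are relevant.
  The social network is the complete graph K_n.\<close>

definition hk_dist :: "nat \<Rightarrow> (nat \<Rightarrow> real) \<Rightarrow> (nat \<Rightarrow> real) \<Rightarrow> real" where
  "hk_dist d p q = sqrt (\<Sum>i<d. (p i - q i)^2)"

definition hk_nbhd :: "nat \<Rightarrow> nat \<Rightarrow> real \<Rightarrow> (nat \<Rightarrow> nat \<Rightarrow> real) \<Rightarrow> nat \<Rightarrow> nat set" where
  "hk_nbhd n d \<epsilon> x v = {u. u < n \<and> hk_dist d (x u) (x v) \<le> \<epsilon>}"

definition hk_update :: "nat \<Rightarrow> nat \<Rightarrow> real \<Rightarrow> (nat \<Rightarrow> nat \<Rightarrow> real) \<Rightarrow> nat \<Rightarrow> (nat \<Rightarrow> nat \<Rightarrow> real)" where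
  "hk_update n d \<epsilon> x v =
     x(v := (\<lambda>i. (\<Sum>u\<in>hk_nbhd n d \<epsilon> x v. x u i) / real (card (hk_nbhd n d \<epsilon> x v))))"

primrec hk_traj :: "nat \<Rightarrow> nat \<Rightarrow> real \<Rightarrow> (nat \<Rightarrow> nat \<Rightarrow> real) \<Rightarrow> nat stream \<Rightarrow> nat \<Rightarrow> (nat \<Rightarrow> nat \<Rightarrow> real)" where
  "hk_traj n d \<epsilon> x0 \<omega> 0 = x0"
| "hk_traj n d \<epsilon> x0 \<omega> (Suc t) = hk_update n d \<epsilon> (hk_traj n d \<epsilon> x0 \<omega> t) (\<omega> !! t)"

definition hk_stable :: "nat \<Rightarrow> nat \<Rightarrow> real \<Rightarrow> real \<Rightarrow> (nat \<Rightarrow> nat \<Rightarrow> real) \<Rightarrow> bool" where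
  "hk_stable n d \<epsilon> \<delta> x \<longleftrightarrow>
     (\<forall>u<n. \<forall>v<n. u \<noteq> v \<longrightarrow> hk_dist d (x u) (x v) \<le> \<epsilon> \<longrightarrow> hk_dist d (x u) (x v) \<le> \<delta>)"

definition hk_time :: "nat \<Rightarrow> nat \<Rightarrow> real \<Rightarrow> real \<Rightarrow> (nat \<Rightarrow> nat \<Rightarrow> real) \<Rightarrow> nat stream \<Rightarrow> ennreal" where
  "hk_time n d \<epsilon> \<delta> x0 \<omega> =
     (if \<exists>t. hk_stable n d \<epsilon> \<delta> (hk_traj n d \<epsilon> x0 \<omega> t)
      then of_nat (LEAST t. hk_stable n d \<epsilon> \<delta> (hk_traj n d \<epsilon> x0 \<omega> t)) else \<infinity>)"

definition hk_space :: "nat \<Rightarrow> nat stream measure" where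
  "hk_space n = stream_space (measure_pmf (pmf_of_set {..<n}))"

end

theory Submission
  imports Defs
begin

(*
  The potential  \<Psi>(x) = \<Sum>a b. min (|x a - x b|^2) (\<epsilon>^2)  is at most n^2 \<epsilon>^2, and updating agent v
  lowers it by at least 2 |N v| |x v - m v|^2, where m v is the centroid of the neighbourhood N v.
  Hence one random step lowers \<Psi> in expectation by at least 2 E(x) / n, where
  E(x) = \<Sum>v. |N v| |x v - m v|^2.

  If the state is not \<delta>-stable, some influence edge u w is longer than \<delta>.  If N u = N w, both
  agents move to the same centroid and E(x) \<ge> |x u - x w|^2 / 2 > \<delta>^2 / 2.  Otherwise some b is
  a neighbour of one endpoint but not of the other, which gives a path of two influence edges
  whose ends are more than \<epsilon> apart; pairing the Laplacian of x with the projection onto the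
  direction of that path, clamped to a bounded range, yields E(x) \<ge> \<epsilon>^2 / (16 n^2).

  So while the system is unstable, \<Psi> drifts down by min (\<delta>^2) (\<epsilon>^2 / (8 n^2)) / n per step,
  and the expected time to stability is at most n^3 \<epsilon>^2 / min (\<delta>^2) (\<epsilon>^2 / (8 n^2)),
  which is at most 8 n^3 (n^2 + (\<epsilon> / \<delta>)^2).
*)

section \<open>Expected hitting time under a drift condition\<close>

lemma hk_traj_Suc_shift:
  "hk_traj n d \<epsilon> x \<omega> (Suc t) = hk_traj n d \<epsilon> (hk_update n d \<epsilon> x (shd \<omega>)) (stl \<omega>) t"
  by (induction t) simp_all

definition hk_unstable_upto ::
    "nat \<Rightarrow> nat \<Rightarrow> real \<Rightarrow> real \<Rightarrow> (nat \<Rightarrow> nat \<Rightarrow> real) \<Rightarrow> nat stream \<Rightarrow> nat \<Rightarrow> bool" where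
  "hk_unstable_upto n d \<epsilon> \<delta> x \<omega> s \<longleftrightarrow> (\<forall>t\<le>s. \<not> hk_stable n d \<epsilon> \<delta> (hk_traj n d \<epsilon> x \<omega> t))"

lemma hk_unstable_upto_0: "hk_unstable_upto n d \<epsilon> \<delta> x \<omega> 0 \<longleftrightarrow> \<not> hk_stable n d \<epsilon> \<delta> x"
  by (simp add: hk_unstable_upto_def)

lemma hk_unstable_upto_Suc:
  "hk_unstable_upto n d \<epsilon> \<delta> x \<omega> (Suc s) \<longleftrightarrow>
     \<not> hk_stable n d \<epsilon> \<delta> x \<and> hk_unstable_upto n d \<epsilon> \<delta> (hk_update n d \<epsilon> x (shd \<omega>)) (stl \<omega>) s"
  unfolding hk_unstable_upto_def less_Suc_eq_le[symmetric] All_less_Suc2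
  by (simp add: hk_traj_Suc_shift del: hk_traj.simps(2))

lemma hk_time_eq_suminf:
  "hk_time n d \<epsilon> \<delta> x \<omega> = (\<Sum>s. if hk_unstable_upto n d \<epsilon> \<delta> x \<omega> s then 1 else 0 :: ennreal)"
proof (cases "\<exists>t. hk_stable n d \<epsilon> \<delta> (hk_traj n d \<epsilon> x \<omega> t)")
  case True
  define T where "T = (LEAST t. hk_stable n d \<epsilon> \<delta> (hk_traj n d \<epsilon> x \<omega> t))"
  have unstable_iff: "hk_unstable_upto n d \<epsilon> \<delta> x \<omega> s \<longleftrightarrow> s < T" for s
    unfolding hk_unstable_upto_def T_def
    by (metis LeastI_ex True le_less_trans not_less not_less_Least)
  have "(\<Sum>s. if hk_unstable_upto n d \<epsilon> \<delta> x \<omega> s then 1 else 0 :: ennreal)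
      = (\<Sum>s<T. if hk_unstable_upto n d \<epsilon> \<delta> x \<omega> s then 1 else 0)"
    by (rule suminf_finite) (auto simp: unstable_iff)
  also have "\<dots> = of_nat T"
    by (simp add: unstable_iff)
  finally show ?thesis
    using True by (simp add: hk_time_def T_def)
next
  case False
  then have "hk_unstable_upto n d \<epsilon> \<delta> x \<omega> s" for s
    by (auto simp: hk_unstable_upto_def)
  moreover have "(\<Sum>s. ennreal 1) = \<top>"
    by (rule summable_iff_suminf_neq_top) (auto simp: summable_const_iff)
  ultimately show ?thesis
    using False by (simp add: hk_time_def)
qed

lemma measurable_shd_hk_space [measurable]: "shd \<in> hk_space n \<rightarrow>\<^sub>M count_space UNIV"
  unfolding hk_space_def
  using measurable_shd[of "measure_pmf (pmf_of_set {..<n})"]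
  by (simp add: measurable_cong_sets[OF refl sets_measure_pmf_count_space])

lemma measurable_stl_hk_space [measurable]: "stl \<in> hk_space n \<rightarrow>\<^sub>M hk_space n"
  unfolding hk_space_def by (rule measurable_stl)

lemma measurable_hk_unstable_upto [measurable]:
  "Measurable.pred (hk_space n) (\<lambda>\<omega>. hk_unstable_upto n d \<epsilon> \<delta> x \<omega> s)"
proof (induction s arbitrary: x)
  case 0
  then show ?case by (simp add: hk_unstable_upto_0)
next
  case (Suc s)
  have "(\<lambda>\<omega>. (\<lambda>v \<omega>. \<not> hk_stable n d \<epsilon> \<delta> x \<and> hk_unstable_upto n d \<epsilon> \<delta> (hk_update n d \<epsilon> x v) (stl \<omega>) s)
           (shd \<omega>) \<omega>) \<in> hk_space n \<rightarrow>\<^sub>M count_space UNIV"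
    by (rule measurable_compose_countable'[OF _ measurable_shd_hk_space]) (use Suc.IH in measurable)
  then show ?case by (simp add: hk_unstable_upto_Suc)
qed

lemma nn_integral_pmf_of_set_lessThan:
  fixes n :: nat
  assumes "n \<ge> 1" and "\<And>v. a v \<ge> 0"
  shows "(\<integral>\<^sup>+v. ennreal (a v) \<partial>measure_pmf (pmf_of_set {..<n})) = ennreal ((\<Sum>v<n. a v) / n)"
proof -
  have ne: "{..<n} \<noteq> {}"
    using assms(1) by (auto simp: lessThan_empty_iff)
  have set_pmf: "set_pmf (pmf_of_set {..<n}) = {..<n}"
    using ne by simp
  have "(\<integral>\<^sup>+v. ennreal (a v) \<partial>measure_pmf (pmf_of_set {..<n})) = (\<Sum>v<n. ennreal (a v) * ennreal (1 / n))"
    using ne by (subst nn_integral_measure_pmf_finite) (auto simp: set_pmf)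
  also have "\<dots> = ennreal (\<Sum>v<n. a v / n)"
    using assms(2) by (simp add: ennreal_mult'[symmetric] sum_ennreal)
  finally show ?thesis
    by (simp add: sum_divide_distrib)
qed

lemma prob_space_hk_space: "prob_space (hk_space n)"
  unfolding hk_space_def by (rule prob_space.prob_space_stream_space[OF prob_space_measure_pmf])

lemma nn_integral_hk_space:
  assumes "g \<in> borel_measurable (hk_space n)"
  shows "(\<integral>\<^sup>+\<omega>. g \<omega> \<partial>hk_space n)
           = (\<integral>\<^sup>+v. (\<integral>\<^sup>+\<omega>. g (v ## \<omega>) \<partial>hk_space n) \<partial>measure_pmf (pmf_of_set {..<n}))"
  using prob_space.nn_integral_stream_space[OF prob_space_measure_pmf assms[unfolded hk_space_def]]
  unfolding hk_space_def .

definition hk_time_upto ::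
    "nat \<Rightarrow> nat \<Rightarrow> real \<Rightarrow> real \<Rightarrow> (nat \<Rightarrow> nat \<Rightarrow> real) \<Rightarrow> nat stream \<Rightarrow> nat \<Rightarrow> ennreal" where
  "hk_time_upto n d \<epsilon> \<delta> x \<omega> t = (\<Sum>s<t. if hk_unstable_upto n d \<epsilon> \<delta> x \<omega> s then 1 else 0)"

lemma hk_time_upto_stable: "hk_stable n d \<epsilon> \<delta> x \<Longrightarrow> hk_time_upto n d \<epsilon> \<delta> x \<omega> t = 0"
  unfolding hk_time_upto_def
  by (intro sum.neutral ballI) (metis hk_unstable_upto_0 hk_unstable_upto_Suc not0_implies_Suc)

lemma hk_time_upto_Suc:
  "\<not> hk_stable n d \<epsilon> \<delta> x \<Longrightarrow>
     hk_time_upto n d \<epsilon> \<delta> x \<omega> (Suc t) = 1 + hk_time_upto n d \<epsilon> \<delta> (hk_update n d \<epsilon> x (shd \<omega>)) (stl \<omega>) t"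
  unfolding hk_time_upto_def sum.lessThan_Suc_shift by (simp add: hk_unstable_upto_0 hk_unstable_upto_Suc)

lemma nn_integral_hk_time_upto_Suc:
  assumes "\<not> hk_stable n d \<epsilon> \<delta> x"
  shows "(\<integral>\<^sup>+\<omega>. hk_time_upto n d \<epsilon> \<delta> x \<omega> (Suc t) \<partial>hk_space n)
           = 1 + (\<integral>\<^sup>+v. (\<integral>\<^sup>+\<omega>. hk_time_upto n d \<epsilon> \<delta> (hk_update n d \<epsilon> x v) \<omega> t \<partial>hk_space n)
                    \<partial>measure_pmf (pmf_of_set {..<n}))"
proof -
  have [measurable]: "(\<lambda>\<omega>. hk_time_upto n d \<epsilon> \<delta> y \<omega> t) \<in> borel_measurable (hk_space n)" for y
    unfolding hk_time_upto_def by measurable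
  have "(\<integral>\<^sup>+\<omega>. hk_time_upto n d \<epsilon> \<delta> x \<omega> (Suc t) \<partial>hk_space n)
      = (\<integral>\<^sup>+\<omega>. 1 \<partial>hk_space n)
        + (\<integral>\<^sup>+\<omega>. hk_time_upto n d \<epsilon> \<delta> (hk_update n d \<epsilon> x (shd \<omega>)) (stl \<omega>) t \<partial>hk_space n)"
    unfolding hk_time_upto_Suc[OF assms] by (rule nn_integral_add) simp_all
  also have "\<dots> = 1 + (\<integral>\<^sup>+v. (\<integral>\<^sup>+\<omega>. hk_time_upto n d \<epsilon> \<delta> (hk_update n d \<epsilon> x v) \<omega> t \<partial>hk_space n)
                    \<partial>measure_pmf (pmf_of_set {..<n}))"
    by (subst nn_integral_hk_space) (simp_all add: prob_space.emeasure_space_1[OF prob_space_hk_space])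
  finally show ?thesis .
qed

lemma nn_integral_hk_time_upto_le:
  fixes \<Phi> :: "(nat \<Rightarrow> nat \<Rightarrow> real) \<Rightarrow> real"
  assumes n: "n \<ge> 1" and L: "L > 0" and nonneg: "\<And>x. \<Phi> x \<ge> 0"
    and drift: "\<And>x. \<not> hk_stable n d \<epsilon> \<delta> x \<Longrightarrow> L + (\<Sum>v<n. \<Phi> (hk_update n d \<epsilon> x v)) / n \<le> \<Phi> x"
  shows "(\<integral>\<^sup>+\<omega>. hk_time_upto n d \<epsilon> \<delta> x \<omega> t \<partial>hk_space n) \<le> ennreal (\<Phi> x / L)"
proof (induction t arbitrary: x)
  case 0
  then show ?case by (simp add: hk_time_upto_def)
next
  case (Suc t)
  show ?case
  proof (cases "hk_stable n d \<epsilon> \<delta> x")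
    case True
    then show ?thesis by (simp add: hk_time_upto_stable)
  next
    case False
    define r where "r = (\<Sum>v<n. \<Phi> (hk_update n d \<epsilon> x v) / L) / n"
    have "(\<integral>\<^sup>+\<omega>. hk_time_upto n d \<epsilon> \<delta> x \<omega> (Suc t) \<partial>hk_space n)
        \<le> 1 + (\<integral>\<^sup>+v. ennreal (\<Phi> (hk_update n d \<epsilon> x v) / L) \<partial>measure_pmf (pmf_of_set {..<n}))"
      unfolding nn_integral_hk_time_upto_Suc[OF False] by (intro add_left_mono nn_integral_mono Suc.IH)
    also have "\<dots> = ennreal (1 + r)"
      using n L nonneg
      by (simp add: r_def nn_integral_pmf_of_set_lessThan ennreal_plus sum_nonneg divide_nonneg_nonneg)
    also have "1 + r = (L + (\<Sum>v<n. \<Phi> (hk_update n d \<epsilon> x v)) / n) / L"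
      using L by (simp add: r_def field_simps sum_divide_distrib[symmetric])
    also have "\<dots> \<le> \<Phi> x / L"
      using drift[OF False] L by (simp add: divide_right_mono)
    finally show ?thesis
      by (simp add: ennreal_leI)
  qed
qed

lemma hk_expected_time_le_drift:
  fixes \<Phi> :: "(nat \<Rightarrow> nat \<Rightarrow> real) \<Rightarrow> real"
  assumes "n \<ge> 1" and "L > 0" and "\<And>x. \<Phi> x \<ge> 0"
    and "\<And>x. \<not> hk_stable n d \<epsilon> \<delta> x \<Longrightarrow> L + (\<Sum>v<n. \<Phi> (hk_update n d \<epsilon> x v)) / n \<le> \<Phi> x"
  shows "(\<integral>\<^sup>+\<omega>. hk_time n d \<epsilon> \<delta> x \<omega> \<partial>hk_space n) \<le> ennreal (\<Phi> x / L)"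
proof -
  have "(\<integral>\<^sup>+\<omega>. hk_time n d \<epsilon> \<delta> x \<omega> \<partial>hk_space n)
      = (\<Sum>s. \<integral>\<^sup>+\<omega>. (if hk_unstable_upto n d \<epsilon> \<delta> x \<omega> s then 1 else 0 :: ennreal) \<partial>hk_space n)"
    unfolding hk_time_eq_suminf by (rule nn_integral_suminf) measurable
  also have "\<dots> = (SUP t. \<integral>\<^sup>+\<omega>. hk_time_upto n d \<epsilon> \<delta> x \<omega> t \<partial>hk_space n)"
    unfolding suminf_eq_SUP hk_time_upto_def by (subst nn_integral_sum) simp_all
  also have "\<dots> \<le> ennreal (\<Phi> x / L)"
    using nn_integral_hk_time_upto_le[OF assms] by (rule SUP_least)
  finally show ?thesis .
qed

definition sqdist :: "nat \<Rightarrow> (nat \<Rightarrow> real) \<Rightarrow> (nat \<Rightarrow> real) \<Rightarrow> real" where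
  "sqdist d p q = (\<Sum>i<d. (p i - q i)^2)"

lemma sqdist_nonneg: "0 \<le> sqdist d p q"
  by (simp add: sqdist_def sum_nonneg)

lemma sqdist_commute: "sqdist d p q = sqdist d q p"
  by (simp add: sqdist_def power2_commute)

lemma sqdist_self [simp]: "sqdist d p p = 0"
  by (simp add: sqdist_def)

lemma sqdist_triangle: "sqdist d p q \<le> 2 * sqdist d p r + 2 * sqdist d r q"
proof -
  have "(p i - q i)^2 \<le> 2 * (p i - r i)^2 + 2 * (r i - q i)^2" for i
    using zero_le_power2[of "p i - 2 * r i + q i"] by (simp add: power2_eq_square algebra_simps)
  then have "sqdist d p q \<le> (\<Sum>i<d. 2 * (p i - r i)^2 + 2 * (r i - q i)^2)"
    unfolding sqdist_def by (rule sum_mono)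
  also have "\<dots> = 2 * sqdist d p r + 2 * sqdist d r q"
    by (simp add: sqdist_def sum.distrib sum_distrib_left)
  finally show ?thesis .
qed

lemma hk_dist_le_iff_sqdist: "0 \<le> \<epsilon> \<Longrightarrow> hk_dist d p q \<le> \<epsilon> \<longleftrightarrow> sqdist d p q \<le> \<epsilon>^2"
  unfolding hk_dist_def sqdist_def[symmetric] by (meson real_le_lsqrt sqrt_le_D)

lemma hk_dist_commute: "hk_dist d p q = hk_dist d q p"
  by (simp add: hk_dist_def power2_commute)

lemma mem_hk_nbhd_iff:
  "0 \<le> \<epsilon> \<Longrightarrow> u \<in> hk_nbhd n d \<epsilon> x v \<longleftrightarrow> u < n \<and> sqdist d (x u) (x v) \<le> \<epsilon>^2"
  by (simp add: hk_nbhd_def hk_dist_le_iff_sqdist)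

lemma hk_nbhd_subset_lessThan: "hk_nbhd n d \<epsilon> x v \<subseteq> {..<n}"
  by (auto simp: hk_nbhd_def)

lemma finite_hk_nbhd: "finite (hk_nbhd n d \<epsilon> x v)"
  using finite_subset[OF hk_nbhd_subset_lessThan] by simp

lemma card_hk_nbhd_le: "card (hk_nbhd n d \<epsilon> x v) \<le> n"
  using card_mono[OF finite_lessThan hk_nbhd_subset_lessThan] by simp

lemma self_mem_hk_nbhd: "v < n \<Longrightarrow> 0 \<le> \<epsilon> \<Longrightarrow> v \<in> hk_nbhd n d \<epsilon> x v"
  by (simp add: hk_nbhd_def hk_dist_def)

lemma card_hk_nbhd_ge_1: "v < n \<Longrightarrow> 0 \<le> \<epsilon> \<Longrightarrow> 1 \<le> card (hk_nbhd n d \<epsilon> x v)"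
  using self_mem_hk_nbhd finite_hk_nbhd by (metis One_nat_def Suc_leI card_gt_0_iff empty_iff)

definition centroid :: "nat set \<Rightarrow> (nat \<Rightarrow> nat \<Rightarrow> real) \<Rightarrow> nat \<Rightarrow> real" where
  "centroid N x = (\<lambda>i. (\<Sum>u\<in>N. x u i) / card N)"

lemma hk_update_eq_centroid: "hk_update n d \<epsilon> x v = x(v := centroid (hk_nbhd n d \<epsilon> x v) x)"
  unfolding hk_update_def centroid_def ..

(* No finiteness or non-emptiness is needed: otherwise both sides are 0. *)
lemma sum_eq_card_mult_centroid: "(\<Sum>u\<in>N. x u i) = card N * centroid N x i"
  by (cases "card N = 0") (auto simp: centroid_def dest: card_eq_0_iff[THEN iffD1])

lemma sum_inner_diff_centroid:
  "(\<Sum>c\<in>N. \<Sum>i<d. e i * (z i - x c i)) = card N * (\<Sum>i<d. e i * (z i - centroid N x i))"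
proof -
  have "(\<Sum>c\<in>N. \<Sum>i<d. e i * (z i - x c i)) = (\<Sum>i<d. e i * (card N * z i - (\<Sum>c\<in>N. x c i)))"
    by (subst sum.swap, intro sum.cong refl) (simp add: sum_subtractf sum_distrib_left[symmetric] algebra_simps)
  also have "\<dots> = card N * (\<Sum>i<d. e i * (z i - centroid N x i))"
    by (simp add: sum_eq_card_mult_centroid sum_distrib_left algebra_simps)
  finally show ?thesis .
qed

lemma sum_sqdist_diff_centroid:
  "(\<Sum>b\<in>N. sqdist d z (x b) - sqdist d (centroid N x) (x b)) = card N * sqdist d z (centroid N x)"
proof -
  define y where "y = centroid N x"
  have "(\<Sum>b\<in>N. (z i - x b i)^2 - (y i - x b i)^2) = card N * (z i - y i)^2" for i
  proof -
    have "(\<Sum>b\<in>N. (z i - x b i)^2 - (y i - x b i)^2) = (\<Sum>b\<in>N. (z i^2 - y i^2) - 2 * (z i - y i) * x b i)"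
      by (intro sum.cong) (auto simp: power2_eq_square algebra_simps)
    also have "\<dots> = card N * (z i^2 - y i^2) - 2 * (z i - y i) * (\<Sum>b\<in>N. x b i)"
      by (simp add: sum_subtractf sum_distrib_left)
    also have "\<dots> = card N * (z i - y i)^2"
      by (simp add: y_def sum_eq_card_mult_centroid power2_eq_square algebra_simps)
    finally show ?thesis .
  qed
  then have "(\<Sum>i<d. \<Sum>b\<in>N. (z i - x b i)^2 - (y i - x b i)^2) = card N * sqdist d z y"
    by (simp add: sqdist_def sum_distrib_left)
  then show ?thesis
    unfolding sqdist_def y_def[symmetric] sum_subtractf[symmetric] by (subst sum.swap)
qed

section \<open>The truncated potential\<close>

definition hk_potential :: "nat \<Rightarrow> nat \<Rightarrow> real \<Rightarrow> (nat \<Rightarrow> nat \<Rightarrow> real) \<Rightarrow> real" where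
  "hk_potential n d \<epsilon> x = (\<Sum>a<n. \<Sum>b<n. min (sqdist d (x a) (x b)) (\<epsilon>^2))"

lemma hk_potential_nonneg: "0 \<le> hk_potential n d \<epsilon> x"
  unfolding hk_potential_def by (intro sum_nonneg) (simp add: sqdist_nonneg)

lemma hk_potential_le: "hk_potential n d \<epsilon> x \<le> real n ^ 2 * \<epsilon>^2"
proof -
  have "hk_potential n d \<epsilon> x \<le> (\<Sum>a<n. \<Sum>b<n. \<epsilon>^2)"
    unfolding hk_potential_def by (intro sum_mono) simp
  then show ?thesis
    by (simp add: power2_eq_square)
qed

lemma sum_symmetric_pairs_remove:
  fixes F :: "'a \<Rightarrow> 'a \<Rightarrow> 'b::comm_semiring_1"
  assumes "finite I" and "v \<in> I" and "\<And>a b. F a b = F b a"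
  shows "(\<Sum>a\<in>I. \<Sum>b\<in>I. F a b)
           = F v v + 2 * (\<Sum>b\<in>I - {v}. F v b) + (\<Sum>a\<in>I - {v}. \<Sum>b\<in>I - {v}. F a b)"
proof -
  have row: "(\<Sum>b\<in>I. F a b) = F v a + (\<Sum>b\<in>I - {v}. F a b)" for a
    by (simp only: sum.remove[OF assms(1,2)] assms(3)[of a v])
  have "(\<Sum>a\<in>I. \<Sum>b\<in>I. F a b) = (\<Sum>b\<in>I. F v b) + (\<Sum>a\<in>I - {v}. \<Sum>b\<in>I. F a b)"
    using assms(1,2) by (rule sum.remove)
  also have "\<dots> = (F v v + (\<Sum>b\<in>I - {v}. F v b)) + ((\<Sum>a\<in>I - {v}. F v a) + (\<Sum>a\<in>I - {v}. \<Sum>b\<in>I - {v}. F a b))"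
    by (simp only: row sum.distrib)
  finally show ?thesis
    by (simp add: mult_2 ac_simps)
qed

definition hk_update_energy :: "nat \<Rightarrow> nat \<Rightarrow> real \<Rightarrow> (nat \<Rightarrow> nat \<Rightarrow> real) \<Rightarrow> real" where
  "hk_update_energy n d \<epsilon> x =
     (\<Sum>a<n. card (hk_nbhd n d \<epsilon> x a) * sqdist d (x a) (centroid (hk_nbhd n d \<epsilon> x a) x))"

lemma hk_update_energy_nonneg: "0 \<le> hk_update_energy n d \<epsilon> x"
  unfolding hk_update_energy_def by (intro sum_nonneg mult_nonneg_nonneg) (simp_all add: sqdist_nonneg)

(* Truncation at \<epsilon>^2 is what makes the update harmless for the other pairs: a pair (v, b) with b
   outside the neighbourhood contributes \<epsilon>^2 before the update and at most \<epsilon>^2 after it. *)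
lemma hk_potential_update_decrease:
  assumes v: "v < n" and \<epsilon>: "0 < \<epsilon>"
  shows "2 * card (hk_nbhd n d \<epsilon> x v) * sqdist d (x v) (centroid (hk_nbhd n d \<epsilon> x v) x)
           \<le> hk_potential n d \<epsilon> x - hk_potential n d \<epsilon> (hk_update n d \<epsilon> x v)"
proof -
  define N where "N = hk_nbhd n d \<epsilon> x v"
  define y where "y = centroid N x"
  define F where "F p q = min (sqdist d p q) (\<epsilon>^2)" for p q
  define G where "G b = (if b \<in> N then sqdist d (x v) (x b) - sqdist d y (x b) else 0)" for b
  have F_commute: "F p q = F q p" for p q
    by (simp add: F_def sqdist_commute)
  have pot: "hk_potential n d \<epsilon> z = F (z v) (z v) + 2 * (\<Sum>b\<in>{..<n} - {v}. F (z v) (z b))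
      + (\<Sum>a\<in>{..<n} - {v}. \<Sum>b\<in>{..<n} - {v}. F (z a) (z b))" for z
    unfolding hk_potential_def F_def[symmetric] using v
    by (intro sum_symmetric_pairs_remove) (auto simp: F_commute)
  have "hk_potential n d \<epsilon> x - hk_potential n d \<epsilon> (hk_update n d \<epsilon> x v)
      = 2 * (\<Sum>b\<in>{..<n} - {v}. F (x v) (x b) - F y (x b))"
    unfolding pot[of x] pot[of "hk_update n d \<epsilon> x v"]
    by (simp add: hk_update_eq_centroid N_def[symmetric] y_def[symmetric] F_def sum_subtractf)
  moreover have "G b \<le> F (x v) (x b) - F y (x b)" if "b < n" for b
    using that \<epsilon> by (auto simp: G_def F_def N_def mem_hk_nbhd_iff sqdist_commute)
  then have "(\<Sum>b\<in>{..<n} - {v}. G b) \<le> (\<Sum>b\<in>{..<n} - {v}. F (x v) (x b) - F y (x b))"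
    by (intro sum_mono) simp
  moreover have "(\<Sum>b\<in>{..<n} - {v}. G b) = card N * sqdist d (x v) y + sqdist d y (x v)"
  proof -
    have "v \<in> N"
      unfolding N_def using v \<epsilon> by (simp add: self_mem_hk_nbhd)
    then have "(\<Sum>b\<in>{..<n} - {v}. G b) = (\<Sum>b<n. G b) - G v"
      using v by (simp add: sum_diff1)
    also have "(\<Sum>b<n. G b) = (\<Sum>b\<in>N. sqdist d (x v) (x b) - sqdist d y (x b))"
      unfolding G_def N_def using hk_nbhd_subset_lessThan
      by (simp add: sum.inter_restrict[symmetric] Int_absorb1)
    finally show ?thesis
      using \<open>v \<in> N\<close> by (simp add: G_def y_def sum_sqdist_diff_centroid)
  qed
  ultimately show ?thesis
    using sqdist_nonneg[of d y "x v"] by (simp add: N_def y_def)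
qed

lemma hk_potential_total_decrease:
  assumes "0 < \<epsilon>"
  shows "2 * hk_update_energy n d \<epsilon> x
           \<le> (\<Sum>v<n. hk_potential n d \<epsilon> x - hk_potential n d \<epsilon> (hk_update n d \<epsilon> x v))"
  unfolding hk_update_energy_def sum_distrib_left
  using hk_potential_update_decrease[OF _ assms] by (intro sum_mono) (simp add: mult.assoc)

section \<open>Lower bound on the update energy\<close>

lemma clamp_increment_sq_le:
  fixes p q K :: real
  assumes "0 \<le> K"
  shows "(max 0 (min p K) - max 0 (min q K))^2 \<le> (p - q) * (max 0 (min p K) - max 0 (min q K))"
proof -
  define c where "c = max 0 (min p K) - max 0 (min q K)"
  have "0 \<le> c \<and> c \<le> p - q \<or> p - q \<le> c \<and> c \<le> 0"
    using assms by (auto simp: c_def max_def min_def)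
  then show ?thesis
    unfolding c_def[symmetric] by (auto simp: power2_eq_square intro: mult_right_mono mult_right_mono_neg)
qed

lemma sum_pairs_symmetrize:
  fixes p f :: "'a \<Rightarrow> real"
  assumes "\<And>a c. A a c \<longleftrightarrow> A c a"
  shows "2 * (\<Sum>a\<in>I. \<Sum>c\<in>I. if A a c then (p a - p c) * f a else 0)
           = (\<Sum>a\<in>I. \<Sum>c\<in>I. if A a c then (p a - p c) * (f a - f c) else 0)"
proof -
  have swap: "(\<Sum>a\<in>I. \<Sum>c\<in>I. if A a c then (p a - p c) * f a else 0)
      = (\<Sum>a\<in>I. \<Sum>c\<in>I. if A a c then (p c - p a) * f c else 0)"
    by (subst sum.swap, intro sum.cong refl) (simp add: assms)
  have "2 * (\<Sum>a\<in>I. \<Sum>c\<in>I. if A a c then (p a - p c) * f a else 0)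
      = (\<Sum>a\<in>I. \<Sum>c\<in>I. if A a c then (p a - p c) * f a else 0)
        + (\<Sum>a\<in>I. \<Sum>c\<in>I. if A a c then (p c - p a) * f c else 0)"
    by (simp only: mult_2 swap[symmetric])
  also have "\<dots> = (\<Sum>a\<in>I. \<Sum>c\<in>I. (if A a c then (p a - p c) * f a else 0) + (if A a c then (p c - p a) * f c else 0))"
    by (simp only: sum.distrib)
  also have "\<dots> = (\<Sum>a\<in>I. \<Sum>c\<in>I. if A a c then (p a - p c) * (f a - f c) else 0)"
    by (intro sum.cong refl) (simp add: algebra_simps)
  finally show ?thesis .
qed

(* Symmetrising over the edges turns the pairing into half of a sum of terms
   (p a - p c) (\<phi> a - \<phi> c) \<ge> (\<phi> a - \<phi> c)^2, and along the path u, v, b the clamp \<phi> rises from 0 to K. *)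
lemma laplacian_clamp_pairing_ge:
  fixes p :: "'a \<Rightarrow> real"
  assumes I: "finite I" and sym: "\<And>a c. A a c \<longleftrightarrow> A c a"
    and path: "u \<in> I" "v \<in> I" "b \<in> I" "A u v" "A v b"
    and ends: "p u \<le> 0" "K \<le> p b" and K: "0 < K"
  shows "K^2 / 4 \<le> (\<Sum>a\<in>I. (\<Sum>c\<in>{c\<in>I. A a c}. p a - p c) * max 0 (min (p a) K))"
proof -
  define \<phi> where "\<phi> a = max 0 (min (p a) K)" for a
  define T where "T a c = (if A a c then (p a - p c) * (\<phi> a - \<phi> c) else 0)" for a c
  have T_ge: "(\<phi> a - \<phi> c)^2 \<le> T a c" if "A a c" for a c
    using clamp_increment_sq_le[of K "p a" "p c"] K that by (simp add: T_def \<phi>_def)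
  have T_nonneg: "0 \<le> T a c" for a c
  proof (cases "A a c")
    case True
    then show ?thesis
      using T_ge[OF True] zero_le_power2[of "\<phi> a - \<phi> c"] by linarith
  qed (simp add: T_def)
  have "\<phi> u = 0" "\<phi> b = K"
    using ends K by (auto simp: \<phi>_def)
  then have "u \<noteq> b"
    using K by auto
  then have pairs: "{(u, v), (v, b)} \<subseteq> I \<times> I" "(u, v) \<noteq> (v, b)"
    using path by auto
  have "2 * ((\<phi> u - \<phi> v)^2 + (\<phi> v - \<phi> b)^2) - (\<phi> u - \<phi> b)^2 = (\<phi> u - 2 * \<phi> v + \<phi> b)^2"
    by (simp add: power2_eq_square algebra_simps)
  then have "(\<phi> u - \<phi> b)^2 \<le> 2 * ((\<phi> u - \<phi> v)^2 + (\<phi> v - \<phi> b)^2)"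
    using zero_le_power2[of "\<phi> u - 2 * \<phi> v + \<phi> b"] by linarith
  then have "K^2 \<le> 2 * ((\<phi> u - \<phi> v)^2 + (\<phi> v - \<phi> b)^2)"
    using \<open>\<phi> u = 0\<close> \<open>\<phi> b = K\<close> by simp
  also have "\<dots> \<le> 2 * (T u v + T v b)"
    using T_ge path by (simp add: add_mono)
  also have "\<dots> = 2 * (\<Sum>(a, c)\<in>{(u, v), (v, b)}. T a c)"
    using pairs by simp
  also have "\<dots> \<le> 2 * (\<Sum>(a, c)\<in>I \<times> I. T a c)"
    using I pairs by (intro mult_left_mono sum_mono2) (simp_all add: T_nonneg split_beta)
  also have "\<dots> = 4 * (\<Sum>a\<in>I. (\<Sum>c\<in>{c\<in>I. A a c}. p a - p c) * \<phi> a)"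
  proof -
    have "(\<Sum>(a, c)\<in>I \<times> I. T a c) = 2 * (\<Sum>a\<in>I. \<Sum>c\<in>I. if A a c then (p a - p c) * \<phi> a else 0)"
      unfolding sum_pairs_symmetrize[OF sym] T_def by (simp add: sum.cartesian_product)
    also have "\<dots> = 2 * (\<Sum>a\<in>I. (\<Sum>c\<in>{c\<in>I. A a c}. p a - p c) * \<phi> a)"
      using I by (simp add: sum_distrib_right sum.inter_filter[symmetric])
    finally show ?thesis
      by simp
  qed
  finally show ?thesis
    unfolding \<phi>_def by linarith
qed

lemma sum_inner_diff_mult_le:
  fixes e z :: "nat \<Rightarrow> real" and \<phi> t :: real
  assumes t: "0 < t"
  shows "(\<Sum>c\<in>N. \<Sum>i<d. e i * (z i - x c i)) * \<phi>
           \<le> card N * (t * (\<Sum>i<d. (e i)^2) * sqdist d z (centroid N x) + \<phi>^2 / t) / 2"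
proof -
  define \<sigma> where "\<sigma> = (\<Sum>i<d. e i * (z i - centroid N x i))"
  have cauchy_schwarz: "\<sigma>^2 \<le> (\<Sum>i<d. (e i)^2) * sqdist d z (centroid N x)"
    unfolding \<sigma>_def sqdist_def by (rule Cauchy_Schwarz_ineq_sum)
  have "\<sigma> * \<phi> \<le> (t * \<sigma>^2 + \<phi>^2 / t) / 2"
    using zero_le_power2[of "t * \<sigma> - \<phi>"] t by (simp add: field_simps power2_eq_square)
  also have "\<dots> \<le> (t * (\<Sum>i<d. (e i)^2) * sqdist d z (centroid N x) + \<phi>^2 / t) / 2"
    using cauchy_schwarz t by (simp add: mult.assoc)
  finally show ?thesis
    unfolding sum_inner_diff_centroid \<sigma>_def[symmetric] by (simp add: mult.assoc mult_left_mono)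
qed

lemma hk_laplacian_pairing_le:
  fixes e \<phi> :: "nat \<Rightarrow> real"
  assumes n: "0 < n" and \<phi>: "\<And>a. \<bar>\<phi> a\<bar> \<le> K"
  shows "(\<Sum>a<n. (\<Sum>c\<in>hk_nbhd n d \<epsilon> x a. \<Sum>i<d. e i * (x a i - x c i)) * \<phi> a)
           \<le> 2 * real n ^ 2 * (\<Sum>i<d. (e i)^2) * hk_update_energy n d \<epsilon> x + K^2 / 8"
proof -
  define t :: real where "t = 4 * real n ^ 2"
  have t: "0 < t"
    using n by (simp add: t_def)
  define E where "E = (\<Sum>i<d. (e i)^2)"
  define N where "N a = hk_nbhd n d \<epsilon> x a" for a
  define D where "D a = card (N a) * sqdist d (x a) (centroid (N a) x)" for a
  have "(\<Sum>c\<in>N a. \<Sum>i<d. e i * (x a i - x c i)) * \<phi> a \<le> (t * E * D a + n * K^2 / t) / 2" for a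
  proof -
    have "(\<phi> a)^2 \<le> K^2"
      using power_mono[OF \<phi>[of a] abs_ge_zero, of 2] by simp
    moreover have "card (N a) \<le> n"
      by (simp add: N_def card_hk_nbhd_le)
    ultimately have bound: "card (N a) * (\<phi> a)^2 / t \<le> n * K^2 / t"
      using t by (intro divide_right_mono mult_mono) auto
    have "(\<Sum>c\<in>N a. \<Sum>i<d. e i * (x a i - x c i)) * \<phi> a
        \<le> card (N a) * (t * E * sqdist d (x a) (centroid (N a) x) + (\<phi> a)^2 / t) / 2"
      unfolding E_def by (rule sum_inner_diff_mult_le[OF t])
    also have "\<dots> = (t * E * D a + card (N a) * (\<phi> a)^2 / t) / 2"
      by (simp add: D_def algebra_simps)
    also have "\<dots> \<le> (t * E * D a + n * K^2 / t) / 2"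
      by (rule divide_right_mono[OF add_left_mono[OF bound]]) simp
    finally show ?thesis .
  qed
  then have "(\<Sum>a<n. (\<Sum>c\<in>N a. \<Sum>i<d. e i * (x a i - x c i)) * \<phi> a)
      \<le> (\<Sum>a<n. (t * E * D a + n * K^2 / t) / 2)"
    by (rule sum_mono)
  also have "\<dots> = (t * E * (\<Sum>a<n. D a) + n * (n * K^2 / t)) / 2"
    by (simp add: sum_divide_distrib[symmetric] sum.distrib sum_distrib_left)
  also have "\<dots> = 2 * real n ^ 2 * E * hk_update_energy n d \<epsilon> x + K^2 / 8"
    using n by (simp add: t_def D_def N_def hk_update_energy_def power2_eq_square field_simps)
  finally show ?thesis
    by (simp add: N_def E_def)
qed

lemma hk_update_energy_ge_path:
  assumes \<epsilon>: "0 < \<epsilon>" and u: "u < n"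
    and uv: "v \<in> hk_nbhd n d \<epsilon> x u" and vb: "b \<in> hk_nbhd n d \<epsilon> x v"
  shows "sqdist d (x u) (x b) \<le> 16 * real n ^ 2 * hk_update_energy n d \<epsilon> x"
proof -
  define e where "e i = x b i - x u i" for i
  define L where "L = (\<Sum>i<d. (e i)^2)"
  define p where "p a = (\<Sum>i<d. e i * (x a i - x u i))" for a
  define Q where "Q = hk_update_energy n d \<epsilon> x"
  have L_eq: "L = sqdist d (x u) (x b)"
    by (simp add: L_def e_def sqdist_def power2_commute)
  consider "L = 0" | "0 < L"
    using sqdist_nonneg[of d "x u" "x b"] L_eq by linarith
  then show ?thesis
  proof cases
    case 1
    then show ?thesis
      using L_eq hk_update_energy_nonneg[of n d \<epsilon> x] by simp
  next
    case 2
    have nbhd: "hk_nbhd n d \<epsilon> x a = {c\<in>{..<n}. hk_dist d (x a) (x c) \<le> \<epsilon>}" for a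
      by (auto simp: hk_nbhd_def hk_dist_commute)
    have p_diff: "p a - p c = (\<Sum>i<d. e i * (x a i - x c i))" for a c
      by (simp add: p_def sum_subtractf[symmetric] algebra_simps)
    have clamp_bound: "\<bar>max 0 (min (p a) L)\<bar> \<le> L" for a
      using 2 by auto
    have "p u = 0" "p b = L"
      by (simp_all add: p_def L_def e_def power2_eq_square)
    then have "L^2 / 4 \<le> (\<Sum>a<n. (\<Sum>c\<in>hk_nbhd n d \<epsilon> x a. p a - p c) * max 0 (min (p a) L))"
      unfolding nbhd using u uv vb 2
      by (intro laplacian_clamp_pairing_ge[where A = "\<lambda>a c. hk_dist d (x a) (x c) \<le> \<epsilon>" and u = u and v = v and b = b])
        (auto simp: hk_nbhd_def hk_dist_commute)
    also have "\<dots> \<le> 2 * real n ^ 2 * L * Q + L^2 / 8"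
      using hk_laplacian_pairing_le[where \<phi> = "\<lambda>a. max 0 (min (p a) L)" and K = L and e = e and n = n and d = d
          and \<epsilon> = \<epsilon> and x = x, OF _ clamp_bound, folded L_def Q_def] u
      unfolding p_diff by simp
    finally have "L * (L / 8) \<le> L * (2 * real n ^ 2 * Q)"
      by (simp add: power2_eq_square algebra_simps)
    then have "L / 8 \<le> 2 * real n ^ 2 * Q"
      using 2 by (rule mult_left_le_imp_le)
    then show ?thesis
      by (simp add: L_eq Q_def)
  qed
qed

lemma hk_update_energy_ge_same_nbhd:
  assumes \<epsilon>: "0 < \<epsilon>" and u: "u < n" and w: "w < n" and "u \<noteq> w"
    and same: "hk_nbhd n d \<epsilon> x u = hk_nbhd n d \<epsilon> x w"
  shows "sqdist d (x u) (x w) \<le> 2 * hk_update_energy n d \<epsilon> x"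
proof -
  define m where "m a = centroid (hk_nbhd n d \<epsilon> x a) x" for a
  define D where "D a = card (hk_nbhd n d \<epsilon> x a) * sqdist d (x a) (m a)" for a
  have D_ge: "sqdist d (x a) (m a) \<le> D a" if "a < n" for a
  proof -
    have card: "1 \<le> real (card (hk_nbhd n d \<epsilon> x a))"
      using card_hk_nbhd_ge_1[OF that] \<epsilon> by simp
    show ?thesis
      using mult_right_mono[OF card sqdist_nonneg, of d "x a" "m a"] by (simp add: D_def)
  qed
  have D_nonneg: "0 \<le> D a" for a
    by (simp add: D_def sqdist_nonneg)
  have "D u + D w = (\<Sum>a\<in>{u, w}. D a)"
    using \<open>u \<noteq> w\<close> by simp
  also have "\<dots> \<le> (\<Sum>a<n. D a)"
    using u w by (intro sum_mono2) (auto simp: D_nonneg)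
  also have "\<dots> = hk_update_energy n d \<epsilon> x"
    by (simp add: D_def m_def hk_update_energy_def)
  finally have "D u + D w \<le> hk_update_energy n d \<epsilon> x" .
  moreover have "sqdist d (x u) (x w) \<le> 2 * sqdist d (x u) (m u) + 2 * sqdist d (x w) (m w)"
    using sqdist_triangle[of d "x u" "x w" "m u"] by (simp add: m_def same sqdist_commute)
  ultimately show ?thesis
    using D_ge[OF u] D_ge[OF w] by linarith
qed

lemma hk_update_energy_lower_bound:
  assumes \<epsilon>: "0 < \<epsilon>" and \<delta>: "0 < \<delta>" and unstable: "\<not> hk_stable n d \<epsilon> \<delta> x"
  shows "min (\<delta>^2 / 2) (\<epsilon>^2 / (16 * real n ^ 2)) \<le> hk_update_energy n d \<epsilon> x"
proof -
  obtain u w where u: "u < n" and w: "w < n" and "u \<noteq> w"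
    and close: "hk_dist d (x u) (x w) \<le> \<epsilon>" and far: "\<not> hk_dist d (x u) (x w) \<le> \<delta>"
    using unstable unfolding hk_stable_def by blast
  have "w \<in> hk_nbhd n d \<epsilon> x u" "u \<in> hk_nbhd n d \<epsilon> x w"
    using close u w by (auto simp: hk_nbhd_def hk_dist_commute)
  show ?thesis
  proof (cases "hk_nbhd n d \<epsilon> x u = hk_nbhd n d \<epsilon> x w")
    case True
    have "\<delta>^2 < sqdist d (x u) (x w)"
      using far \<delta> by (simp add: hk_dist_le_iff_sqdist)
    then show ?thesis
      using hk_update_energy_ge_same_nbhd[OF \<epsilon> u w \<open>u \<noteq> w\<close> True] by (simp add: min_le_iff_disj)
  next
    case False
    have escape: "\<epsilon>^2 / (16 * real n ^ 2) \<le> hk_update_energy n d \<epsilon> x"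
      if "a < n" "a' \<in> hk_nbhd n d \<epsilon> x a" "b \<in> hk_nbhd n d \<epsilon> x a'" "b \<notin> hk_nbhd n d \<epsilon> x a" for a a' b
    proof -
      have "\<epsilon>^2 \<le> sqdist d (x a) (x b)"
        using that \<epsilon> by (auto simp: mem_hk_nbhd_iff sqdist_commute)
      also have "\<dots> \<le> 16 * real n ^ 2 * hk_update_energy n d \<epsilon> x"
        using that by (intro hk_update_energy_ge_path[OF \<epsilon>])
      finally show ?thesis
        using that by (simp add: field_simps)
    qed
    from False obtain b where "b \<in> hk_nbhd n d \<epsilon> x w \<and> b \<notin> hk_nbhd n d \<epsilon> x u
        \<or> b \<in> hk_nbhd n d \<epsilon> x u \<and> b \<notin> hk_nbhd n d \<epsilon> x w"
      by blast
    then have "\<epsilon>^2 / (16 * real n ^ 2) \<le> hk_update_energy n d \<epsilon> x"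
      using escape[OF u \<open>w \<in> hk_nbhd n d \<epsilon> x u\<close>] escape[OF w \<open>u \<in> hk_nbhd n d \<epsilon> x w\<close>] by blast
    then show ?thesis
      by (simp add: min_le_iff_disj)
  qed
qed

section \<open>Drift of the potential and the main theorem\<close>

lemma hk_potential_drift:
  assumes n: "1 \<le> n" and \<epsilon>: "0 < \<epsilon>" and \<delta>: "0 < \<delta>" and unstable: "\<not> hk_stable n d \<epsilon> \<delta> x"
  shows "min (\<delta>^2) (\<epsilon>^2 / (8 * real n ^ 2)) / n + (\<Sum>v<n. hk_potential n d \<epsilon> (hk_update n d \<epsilon> x v)) / n
           \<le> hk_potential n d \<epsilon> x"
proof -
  have "\<epsilon>^2 / (8 * real n ^ 2) = 2 * (\<epsilon>^2 / (16 * real n ^ 2))"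
    by simp
  then have "min (\<delta>^2) (\<epsilon>^2 / (8 * real n ^ 2)) \<le> 2 * hk_update_energy n d \<epsilon> x"
    using hk_update_energy_lower_bound[OF \<epsilon> \<delta> unstable] by (auto simp: min_def split: if_splits)
  also have "\<dots> \<le> (\<Sum>v<n. hk_potential n d \<epsilon> x - hk_potential n d \<epsilon> (hk_update n d \<epsilon> x v))"
    using \<epsilon> by (rule hk_potential_total_decrease)
  also have "\<dots> = n * hk_potential n d \<epsilon> x - (\<Sum>v<n. hk_potential n d \<epsilon> (hk_update n d \<epsilon> x v))"
    by (simp add: sum_subtractf)
  finally show ?thesis
    using n by (simp add: field_simps)
qed

lemma potential_drift_ratio_le:
  fixes n :: nat and \<epsilon> \<delta> P :: real
  assumes n: "1 \<le> n" and \<epsilon>: "0 < \<epsilon>" and \<delta>: "0 < \<delta>" and P: "P \<le> real n ^ 2 * \<epsilon>^2"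
  shows "P / (min (\<delta>^2) (\<epsilon>^2 / (8 * real n ^ 2)) / n) \<le> 8 * real n ^ 3 * (real n ^ 2 + (\<epsilon> / \<delta>)^2)"
proof -
  define M where "M = min (\<delta>^2) (\<epsilon>^2 / (8 * real n ^ 2))"
  have n_pos: "0 < real n"
    using n by simp
  have M_pos: "0 < M"
    using \<epsilon> \<delta> n_pos by (simp add: M_def)
  have "P / (M / n) \<le> real n ^ 3 * \<epsilon>^2 / M"
    using P n_pos M_pos by (simp add: field_simps power2_eq_square power3_eq_cube mult_right_mono)
  also have "\<dots> \<le> 8 * real n ^ 3 * (real n ^ 2 + (\<epsilon> / \<delta>)^2)"
  proof (cases "\<delta>^2 \<le> \<epsilon>^2 / (8 * real n ^ 2)")
    case True
    then have "real n ^ 3 * \<epsilon>^2 / M = real n ^ 3 * (\<epsilon> / \<delta>)^2"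
      by (simp add: M_def power_divide)
    then show ?thesis
      using n_pos by (simp add: algebra_simps)
  next
    case False
    then have "real n ^ 3 * \<epsilon>^2 / M = 8 * real n ^ 3 * real n ^ 2"
      using \<epsilon> n_pos by (simp add: M_def field_simps)
    then show ?thesis
      using n_pos by (simp add: algebra_simps)
  qed
  finally show ?thesis
    by (simp add: M_def)
qed

theorem theorem2:
  "\<exists>C>0. \<forall>(n::nat) (d::nat) (\<epsilon>::real) (\<delta>::real) (x0::nat \<Rightarrow> nat \<Rightarrow> real).
     n \<ge> 1 \<longrightarrow> \<epsilon> > 0 \<longrightarrow> \<delta> > 0 \<longrightarrow>
     (\<integral>\<^sup>+ \<omega>. hk_time n d \<epsilon> \<delta> x0 \<omega> \<partial>hk_space n)
       \<le> ennreal (C * real n ^ 3 * (real n ^ 2 + (\<epsilon> / \<delta>)^2))"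
proof (intro exI[of _ 8] conjI allI impI)
  fix n d :: nat and \<epsilon> \<delta> :: real and x0 :: "nat \<Rightarrow> nat \<Rightarrow> real"
  assume n: "n \<ge> 1" and \<epsilon>: "\<epsilon> > 0" and \<delta>: "\<delta> > 0"
  define L where "L = min (\<delta>^2) (\<epsilon>^2 / (8 * real n ^ 2)) / n"
  have "0 < L"
    using n \<epsilon> \<delta> by (simp add: L_def)
  then have "(\<integral>\<^sup>+ \<omega>. hk_time n d \<epsilon> \<delta> x0 \<omega> \<partial>hk_space n) \<le> ennreal (hk_potential n d \<epsilon> x0 / L)"
    using hk_potential_drift[OF n \<epsilon> \<delta>] unfolding L_def
    by (intro hk_expected_time_le_drift[OF n _ hk_potential_nonneg])
  also have "\<dots> \<le> ennreal (8 * real n ^ 3 * (real n ^ 2 + (\<epsilon> / \<delta>)^2))"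
    unfolding L_def by (intro ennreal_leI potential_drift_ratio_le[OF n \<epsilon> \<delta> hk_potential_le])
  finally show "(\<integral>\<^sup>+ \<omega>. hk_time n d \<epsilon> \<delta> x0 \<omega> \<partial>hk_space n)
      \<le> ennreal (8 * real n ^ 3 * (real n ^ 2 + (\<epsilon> / \<delta>)^2))" .
qed simp

end
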